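(* Let $\mathsf P=(E,<,\#)$ be a prime event structure and let $\mathcal N(\mathsf P)=\langle S,E,F,I,\emptyset,\mathsf m,\ell\rangle$ be the net with $S=\{(\ast,e)\mid e\in E\}\cup\{(e,\ast)\mid e\in E\}\cup\{(\{e,e'\},\#)\mid e\ \#\ e'\}$, $F=\{(e,(e,\ast))\}_{e\in E}\cup\{((\ast,e),e)\}_{e\in E}\cup\{((W,\#),e)\mid (W,\#)\in S,\ e\in W\}$, $I=\{((\ast,e'),e)\mid e'<e\}$, $\mathsf m=\{(\ast,e)\mid e\in E\}\cup\{(\{e,e'\},\#)\mid e\ \#\ e'\}$, and $\ell$ the identity. Then $\mathcal N(\mathsf P)$ is an occurrence causal net.
   Context: A prime event structure is $\mathsf P=(E,<,\#)$ with $E$ a countable set, $<$ an irreflexive partial order with $\{e'\mid e'<e\}$ finite for each $e$, and $\#$ irreflexive, symmetric and hereditary ($e\ \#\ e'<e''\Rightarrow e\ \#\ e''$). A labelled contextual net $N=\langle S,T,F,I,R,\mathsf m,\ell\rangle$ has disjoint places $S$ and transitions $T$, flow $F\subseteq(S\times T)\cup(T\times S)$, inhibitor arcs $I\subseteq S\times T$, read arcs $R\subseteq S\times T$, initial marking $\mathsf m$, total labelling $\ell:T\to L$; ${}^\bullet x,x^\bullet$ pre/postsets, ${}^\circ t=\{s\mid(s,t)\in I\}$, $\underline t=\{s\mid(s,t)\in R\}$; every transition has nonempty preset; $t$ enabled at $m$ if ${}^\bullet t+\underline t\subseteq m$ and $m(s)=0$ for $s\in{}^\circ t$; firing gives $m-{}^\bullet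 t+t^\bullet$. States are multisets of transitions of finite firing sequences from $\mathsf m$; $\lfloor X\rfloor$ is the support. Nets are assumed safe. $<_N$ is the transitive closure of $F$. $t\prec_N t'$ iff ${}^\bullet t\cap{}^\circ t'\neq\emptyset$ or $t^\bullet\cap\underline{t'}\neq\emptyset$; $t\ \#_N\ t'$ iff no state contains both. Pre-causal: (1) $<_N\cap(T\times T)=\emptyset$, ${}^\bullet t\cap{}^\circ t=\emptyset$, $t^\bullet\cap\underline t=\emptyset$; (2) $|\ell(s^\bullet)|=1$ for $s\in{}^\circ t$; (3) $t\prec_N t'\Rightarrow$ not $t'\prec_N t$; (4) ${}^\circ t\cup\underline t$ finite; (5) $t\ \#_N\ t'\Rightarrow{}^\bullet t\cap{}^\bullet t'\neq\emptyset$; (6) $t\neq t'$, $\ell(t)=\ell(t')\Rightarrow t\ \#_N\ t'$. Causal net: pre-causal with (a) $\prec^*$ restricted to each state's support a partial order and (b) each transition in some state's support. An occurrence causal net is a causal net $K$ with $R=\emptyset$, $\ell$ injective, $\prec_K^{*}$ a partial order on $T$, and $t\ \#_K\ t'\prec_K^{*}t''$ implying $t\ \#_K\ t''$. *)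

theory Defs
  imports "HOL-Library.Multiset" "HOL-Library.Countable_Set"
begin

definition po_on :: "'a set \<Rightarrow> 'a rel \<Rightarrow> bool" where
  "po_on A r \<longleftrightarrow> (\<forall>x\<in>A. (x, x) \<in> r)
     \<and> (\<forall>x\<in>A. \<forall>y\<in>A. \<forall>z\<in>A. (x, y) \<in> r \<and> (y, z) \<in> r \<longrightarrow> (x, z) \<in> r)
     \<and> (\<forall>x\<in>A. \<forall>y\<in>A. (x, y) \<in> r \<and> (y, x) \<in> r \<longrightarrow> x = y)"

definition pes :: "'e set \<Rightarrow> 'e rel \<Rightarrow> 'e rel \<Rightarrow> bool" where
  "pes E lt cf \<longleftrightarrow> countable E
     \<and> lt \<subseteq> E \<times> E \<and> irrefl lt \<and> trans lt
     \<and> (\<forall>e\<in>E. finite {e'. (e', e) \<in> lt})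
     \<and> cf \<subseteq> E \<times> E \<and> irrefl cf \<and> sym cf
     \<and> (\<forall>e e' e''. (e, e') \<in> cf \<and> (e', e'') \<in> lt \<longrightarrow> (e, e'') \<in> cf)"

datatype ('s, 't) node = Pl 's | Tr 't

record ('s, 't, 'l) cnet =
  places :: "'s set"
  trans  :: "'t set"
  flow   :: "(('s, 't) node \<times> ('s, 't) node) set"
  inh    :: "('s \<times> 't) set"
  rd     :: "('s \<times> 't) set"
  m0     :: "'s \<Rightarrow> nat"
  lab    :: "'t \<Rightarrow> 'l"

definition preT :: "('s, 't, 'l) cnet \<Rightarrow> 't \<Rightarrow> 's set" where
  "preT N t = {s. (Pl s, Tr t) \<in> flow N}"
definition postT :: "('s, 't, 'l) cnet \<Rightarrow> 't \<Rightarrow> 's set" where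
  "postT N t = {s. (Tr t, Pl s) \<in> flow N}"
definition postS :: "('s, 't, 'l) cnet \<Rightarrow> 's \<Rightarrow> 't set" where
  "postS N s = {t. (Pl s, Tr t) \<in> flow N}"
definition inhT :: "('s, 't, 'l) cnet \<Rightarrow> 't \<Rightarrow> 's set" where
  "inhT N t = {s. (s, t) \<in> inh N}"
definition rdT :: "('s, 't, 'l) cnet \<Rightarrow> 't \<Rightarrow> 's set" where
  "rdT N t = {s. (s, t) \<in> rd N}"

definition enabled :: "('s, 't, 'l) cnet \<Rightarrow> ('s \<Rightarrow> nat) \<Rightarrow> 't \<Rightarrow> bool" where
  "enabled N m t \<longleftrightarrow>
     (\<forall>s. of_bool (s \<in> preT N t) + of_bool (s \<in> rdT N t) \<le> m s)
     \<and> (\<forall>s\<in>inhT N t. m s = 0)"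

definition fire :: "('s, 't, 'l) cnet \<Rightarrow> ('s \<Rightarrow> nat) \<Rightarrow> 't \<Rightarrow> ('s \<Rightarrow> nat)" where
  "fire N m t = (\<lambda>s. m s - of_bool (s \<in> preT N t) + of_bool (s \<in> postT N t))"

fun run :: "('s, 't, 'l) cnet \<Rightarrow> ('s \<Rightarrow> nat) \<Rightarrow> 't list \<Rightarrow> ('s \<Rightarrow> nat) option" where
  "run N m [] = Some m"
| "run N m (t # ts) =
     (if t \<in> trans N \<and> enabled N m t then run N (fire N m t) ts else None)"

definition states :: "('s, 't, 'l) cnet \<Rightarrow> 't multiset set" where
  "states N = {mset ts | ts. run N (m0 N) ts \<noteq> None}"

definition reachable :: "('s, 't, 'l) cnet \<Rightarrow> ('s \<Rightarrow> nat) set" where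
  "reachable N = {m. \<exists>ts. run N (m0 N) ts = Some m}"

definition safe :: "('s, 't, 'l) cnet \<Rightarrow> bool" where
  "safe N \<longleftrightarrow> (\<forall>m\<in>reachable N. \<forall>s. m s \<le> 1)"

definition contextual_net :: "('s, 't, 'l) cnet \<Rightarrow> bool" where
  "contextual_net N \<longleftrightarrow>
     flow N \<subseteq> (Pl ` places N \<times> Tr ` trans N) \<union> (Tr ` trans N \<times> Pl ` places N)
     \<and> inh N \<subseteq> places N \<times> trans N
     \<and> rd N \<subseteq> places N \<times> trans N
     \<and> (\<forall>s. m0 N s > 0 \<longrightarrow> s \<in> places N)
     \<and> (\<forall>t\<in>trans N. preT N t \<noteq> {})
     \<and> safe N"

definition prec :: "('s, 't, 'l) cnet \<Rightarrow> 't \<Rightarrow> 't \<Rightarrow> bool" where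
  "prec N t t' \<longleftrightarrow> preT N t \<inter> inhT N t' \<noteq> {} \<or> postT N t \<inter> rdT N t' \<noteq> {}"

definition prec_rel :: "('s, 't, 'l) cnet \<Rightarrow> 't rel" where
  "prec_rel N = {(t, t'). t \<in> trans N \<and> t' \<in> trans N \<and> prec N t t'}"

definition conflict :: "('s, 't, 'l) cnet \<Rightarrow> 't \<Rightarrow> 't \<Rightarrow> bool" where
  "conflict N t t' \<longleftrightarrow> \<not> (\<exists>X\<in>states N. t \<in># X \<and> t' \<in># X)"

definition pre_causal :: "('s, 't, 'l) cnet \<Rightarrow> bool" where
  "pre_causal N \<longleftrightarrow> contextual_net N
     \<and> (\<forall>t t'. (Tr t, Tr t') \<notin> (flow N)\<^sup>+)
     \<and> (\<forall>t\<in>trans N. preT N t \<inter> inhT N t = {} \<and> postT N t \<inter> rdT N t = {})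
     \<and> (\<forall>t\<in>trans N. \<forall>s\<in>inhT N t. card (lab N ` postS N s) = 1)
     \<and> (\<forall>t\<in>trans N. \<forall>t'\<in>trans N. prec N t t' \<longrightarrow> \<not> prec N t' t)
     \<and> (\<forall>t\<in>trans N. finite (inhT N t \<union> rdT N t))
     \<and> (\<forall>t\<in>trans N. \<forall>t'\<in>trans N. conflict N t t' \<longrightarrow> preT N t \<inter> preT N t' \<noteq> {})
     \<and> (\<forall>t\<in>trans N. \<forall>t'\<in>trans N. t \<noteq> t' \<and> lab N t = lab N t' \<longrightarrow> conflict N t t')"

definition causal_net :: "('s, 't, 'l) cnet \<Rightarrow> bool" where
  "causal_net N \<longleftrightarrow> pre_causal N
     \<and> (\<forall>X\<in>states N. po_on (set_mset X)
          ((prec_rel N \<inter> (set_mset X \<times> set_mset X))\<^sup>*))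
     \<and> (\<forall>t\<in>trans N. \<exists>X\<in>states N. t \<in># X)"

definition occurrence_causal_net :: "('s, 't, 'l) cnet \<Rightarrow> bool" where
  "occurrence_causal_net N \<longleftrightarrow> causal_net N
     \<and> rd N = {}
     \<and> inj_on (lab N) (trans N)
     \<and> po_on (trans N) ((prec_rel N)\<^sup>*)
     \<and> (\<forall>t\<in>trans N. \<forall>t'\<in>trans N. \<forall>t''\<in>trans N.
          conflict N t t' \<and> (t', t'') \<in> (prec_rel N)\<^sup>* \<longrightarrow> conflict N t t'')"

text \<open>SE e is the place (*,e), ES e is (e,*), CF W is (W,#).\<close>
datatype 'e pplace = SE 'e | ES 'e | CF "'e set"

definition net_of_pes :: "'e set \<Rightarrow> 'e rel \<Rightarrow> 'e rel \<Rightarrow> ('e pplace, 'e, 'e) cnet" where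
  "net_of_pes E lt cf =
     (let S = {SE e | e. e \<in> E} \<union> {ES e | e. e \<in> E} \<union> {CF {e, e'} | e e'. (e, e') \<in> cf};
          M = {SE e | e. e \<in> E} \<union> {CF {e, e'} | e e'. (e, e') \<in> cf}
      in \<lparr> places = S,
           trans = E,
           flow = {(Tr e, Pl (ES e)) | e. e \<in> E}
                  \<union> {(Pl (SE e), Tr e) | e. e \<in> E}
                  \<union> {(Pl (CF W), Tr e) | W e. CF W \<in> S \<and> e \<in> W},
           inh = {(SE e', e) | e' e. (e', e) \<in> lt},
           rd = {},
           m0 = (\<lambda>s. if s \<in> M then 1 else 0),
           lab = id \<rparr>)"

end

theory Submission
  imports Defs
begin

text \<open>A reachable marking of \<open>N(P)\<close> only records the set \<open>A\<close> of events fired so far: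
  \<open>(*,e)\<close> is marked iff \<open>e \<notin> A\<close>, \<open>(e,*)\<close> iff \<open>e \<in> A\<close>, and a conflict place \<open>({e,e'},#)\<close>
  iff neither event is in \<open>A\<close>. An event is then enabled iff it has not fired, all its
  causes have fired (inhibitor arcs on \<open>(*,e')\<close>) and no event in conflict with it has
  fired (the shared conflict place). So the states are the linearisations of the finite,
  downward closed, conflict-free sets of events; consequently net conflict is \<open>#\<close>, the
  precedence \<open>\<prec>\<close> is \<open><\<close>, and every axiom of an occurrence causal net is inherited from
  the event structure.\<close>

lemma run_append:
  "run N m (xs @ ys) = (case run N m xs of None \<Rightarrow> None | Some m' \<Rightarrow> run N m' ys)"
  by (induction xs arbitrary: m) auto

lemma finite_has_maximal_wrt:
  assumes "finite C" "C \<noteq> {}" "irrefl r" "Relation.trans r"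
  obtains m where "m \<in> C" "\<And>e. e \<in> C \<Longrightarrow> (m, e) \<notin> r"
proof -
  let ?r = "r \<inter> C \<times> C"
  have "Relation.trans ?r"
    using assms(4) by (rule trans_Restr)
  then have "acyclic ?r"
    using assms(3) by (simp add: acyclic_irrefl irrefl_def)
  then have "wf (?r\<inverse>)"
    using assms(1) by (intro finite_acyclic_wf_converse) auto
  then obtain m where "m \<in> C" "\<And>e. (e, m) \<in> ?r\<inverse> \<Longrightarrow> e \<notin> C"
    using assms(2) by (metis wfE_min')
  then show thesis using that by blast
qed

lemma po_on_rtrancl_subset:
  assumes "R \<subseteq> r" "irrefl r" "Relation.trans r"
  shows "po_on A (R\<^sup>*)"
proof -
  have "x = y \<or> (x, y) \<in> r" if "(x, y) \<in> R\<^sup>*" for x y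
    using that assms(1,3) by (induction rule: rtrancl_induct) (auto dest: transD)
  then have "x = y" if "(x, y) \<in> R\<^sup>*" "(y, x) \<in> R\<^sup>*" for x y
    using that assms(2,3) by (metis irrefl_def transD)
  then show ?thesis
    unfolding po_on_def by auto
qed

locale pes_net =
  fixes E :: "'e set" and lt cf :: "'e rel"
  assumes pes: "pes E lt cf"
begin

abbreviation N :: "('e pplace, 'e, 'e) cnet" where
  "N \<equiv> net_of_pes E lt cf"

lemma lt_subset: "lt \<subseteq> E \<times> E" and lt_irrefl: "irrefl lt" and lt_trans: "Relation.trans lt"
  and finite_causes: "e \<in> E \<Longrightarrow> finite {e'. (e', e) \<in> lt}"
  and cf_subset: "cf \<subseteq> E \<times> E" and cf_irrefl: "(e, e) \<notin> cf" and cf_sym: "sym cf"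
  and cf_hereditary: "(e, e') \<in> cf \<Longrightarrow> (e', e'') \<in> lt \<Longrightarrow> (e, e'') \<in> cf"
  using pes unfolding pes_def irrefl_def by blast+

lemma lt_less_trans: "(x, y) \<in> lt \<Longrightarrow> (y, z) \<in> lt \<Longrightarrow> (x, z) \<in> lt"
  using lt_trans by (rule transD)

definition conflict_pairs :: "'e set set" where
  "conflict_pairs = {{e, e'} | e e'. (e, e') \<in> cf}"

lemma conflict_pair_disjoint:
  assumes "W \<in> conflict_pairs" "t \<in> W" "t \<notin> A" "\<And>e. (t, e) \<in> cf \<Longrightarrow> e \<notin> A"
  shows "W \<inter> A = {}"
  using assms cf_sym cf_irrefl unfolding conflict_pairs_def by (auto dest: symD)

definition marking_of :: "'e set \<Rightarrow> 'e pplace \<Rightarrow> nat" where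
  "marking_of A s = (case s of
       SE e \<Rightarrow> of_bool (e \<in> E \<and> e \<notin> A)
     | ES e \<Rightarrow> of_bool (e \<in> A)
     | CF W \<Rightarrow> of_bool (W \<in> conflict_pairs \<and> W \<inter> A = {}))"

definition conflict_free :: "'e set \<Rightarrow> bool" where
  "conflict_free A \<longleftrightarrow> (\<forall>e\<in>A. \<forall>e'\<in>A. (e, e') \<notin> cf)"

definition downward_closed :: "'e set \<Rightarrow> bool" where
  "downward_closed A \<longleftrightarrow> (\<forall>e\<in>A. \<forall>e'. (e', e) \<in> lt \<longrightarrow> e' \<in> A)"

lemma places_N: "places N = SE ` E \<union> ES ` E \<union> CF ` conflict_pairs"
  by (auto simp: net_of_pes_def Let_def conflict_pairs_def)

lemma trans_N [simp]: "trans N = E"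
  and rd_N [simp]: "rd N = {}"
  and lab_N [simp]: "lab N = id"
  and inh_N: "inh N = {(SE e', e) | e' e. (e', e) \<in> lt}"
  by (simp_all add: net_of_pes_def Let_def)

lemma flow_N: "flow N = {(Tr e, Pl (ES e)) | e. e \<in> E}
    \<union> {(Pl (SE e), Tr e) | e. e \<in> E}
    \<union> {(Pl (CF W), Tr e) | W e. W \<in> conflict_pairs \<and> e \<in> W}"
  by (auto simp: net_of_pes_def Let_def conflict_pairs_def)

lemma m0_N: "m0 N = marking_of {}"
  by (auto simp: net_of_pes_def Let_def marking_of_def conflict_pairs_def split: pplace.split)

lemma preT_N: "t \<in> E \<Longrightarrow> preT N t = insert (SE t) (CF ` {W \<in> conflict_pairs. t \<in> W})"
  by (auto simp: preT_def flow_N)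

lemma postT_N: "postT N t = (if t \<in> E then {ES t} else {})"
  by (auto simp: postT_def flow_N)

lemma inhT_N: "inhT N t = SE ` {e. (e, t) \<in> lt}"
  by (auto simp: inhT_def inh_N)

lemma postS_SE: "e \<in> E \<Longrightarrow> postS N (SE e) = {e}"
  by (auto simp: postS_def flow_N)

lemma rdT_N [simp]: "rdT N t = {}"
  by (simp add: rdT_def)

lemma enabled_marking_of_iff:
  assumes "t \<in> E"
  shows "enabled N (marking_of A) t \<longleftrightarrow>
    t \<notin> A \<and> (\<forall>e. (t, e) \<in> cf \<longrightarrow> e \<notin> A) \<and> (\<forall>e. (e, t) \<in> lt \<longrightarrow> e \<in> A)"
proof -
  have "enabled N (marking_of A) t \<longleftrightarrow>
      (\<forall>s\<in>preT N t. marking_of A s = 1) \<and> (\<forall>s\<in>inhT N t. marking_of A s = 0)"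
    unfolding enabled_def by (auto simp: marking_of_def split: pplace.split)
  also have "(\<forall>s\<in>preT N t. marking_of A s = 1) \<longleftrightarrow>
      t \<notin> A \<and> (\<forall>e. (t, e) \<in> cf \<longrightarrow> e \<notin> A)"
  proof
    assume "\<forall>s\<in>preT N t. marking_of A s = 1"
    moreover have "CF {t, e} \<in> preT N t" if "(t, e) \<in> cf" for e
      using that assms by (auto simp: preT_N conflict_pairs_def)
    ultimately show "t \<notin> A \<and> (\<forall>e. (t, e) \<in> cf \<longrightarrow> e \<notin> A)"
      using assms by (fastforce simp: preT_N marking_of_def)
  next
    assume "t \<notin> A \<and> (\<forall>e. (t, e) \<in> cf \<longrightarrow> e \<notin> A)"
    then show "\<forall>s\<in>preT N t. marking_of A s = 1"
      using assms conflict_pair_disjoint[of _ t A] by (auto simp: preT_N marking_of_def)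
  qed
  also have "(\<forall>s\<in>inhT N t. marking_of A s = 0) \<longleftrightarrow> (\<forall>e. (e, t) \<in> lt \<longrightarrow> e \<in> A)"
    using lt_subset by (auto simp: inhT_N marking_of_def)
  finally show ?thesis by simp
qed

lemma fire_marking_of:
  assumes "t \<in> E" "enabled N (marking_of A) t"
  shows "fire N (marking_of A) t = marking_of (insert t A)"
proof
  fix s
  have "t \<notin> A" "\<forall>e. (t, e) \<in> cf \<longrightarrow> e \<notin> A"
    using assms enabled_marking_of_iff by auto
  then show "fire N (marking_of A) t s = marking_of (insert t A) s"
    using assms(1) conflict_pair_disjoint[of _ t A]
    by (cases s) (auto simp: fire_def preT_N postT_N marking_of_def)
qed

lemma run_marking_of:
  "conflict_free A \<Longrightarrow> run N (marking_of A) ts = Some m \<Longrightarrow>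
    m = marking_of (A \<union> set ts) \<and> conflict_free (A \<union> set ts)"
proof (induction ts arbitrary: A)
  case Nil
  then show ?case by simp
next
  case (Cons t ts)
  then have t: "t \<in> E" and en: "enabled N (marking_of A) t"
    and run: "run N (marking_of (insert t A)) ts = Some m"
    by (auto simp: fire_marking_of split: if_splits)
  have "conflict_free (insert t A)"
    using Cons.prems(1) en cf_irrefl cf_sym
    unfolding enabled_marking_of_iff[OF t] conflict_free_def by (auto dest: symD)
  then show ?case
    using Cons.IH[OF _ run] by simp
qed

lemma reachable_marking:
  "run N (m0 N) ts = Some m \<Longrightarrow> m = marking_of (set ts) \<and> conflict_free (set ts)"
  using run_marking_of[of "{}"] by (simp add: m0_N conflict_free_def)

text \<open>Firing a maximal event last linearises any finite configuration.\<close>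

lemma run_to_configuration:
  assumes "finite C" "C \<subseteq> E" "downward_closed C" "conflict_free C"
  shows "\<exists>ts. run N (m0 N) ts = Some (marking_of C) \<and> set ts = C"
  using assms
proof (induction C rule: finite_remove_induct)
  case empty
  show ?case by (intro exI[of _ "[]"]) (simp add: m0_N)
next
  case (remove C)
  obtain e where e: "e \<in> C" "\<And>e'. e' \<in> C \<Longrightarrow> (e, e') \<notin> lt"
    using finite_has_maximal_wrt[OF remove.hyps(1,2) lt_irrefl lt_trans] by blast
  have "downward_closed (C - {e})" "conflict_free (C - {e})"
    using remove.prems e(2) unfolding downward_closed_def conflict_free_def by blast+
  then obtain ts where ts: "run N (m0 N) ts = Some (marking_of (C - {e}))" "set ts = C - {e}"
    using remove.IH[OF e(1)] remove.prems(1) by blast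
  have "e \<in> E" using e(1) remove.prems(1) by blast
  moreover have "enabled N (marking_of (C - {e})) e"
    using remove.prems(2,3) e(1) lt_irrefl \<open>e \<in> E\<close>
    unfolding enabled_marking_of_iff[OF \<open>e \<in> E\<close>] downward_closed_def conflict_free_def irrefl_def
    by blast
  ultimately have "run N (m0 N) (ts @ [e]) = Some (marking_of C)"
    using ts(1) e(1) by (simp add: run_append fire_marking_of insert_absorb)
  then show ?case
    using ts(2) e(1) by (intro exI[of _ "ts @ [e]"]) auto
qed

lemma conflict_inherited:
  assumes "(a, b) \<in> cf" "(a, x) \<in> lt\<^sup>=" "(b, y) \<in> lt\<^sup>="
  shows "(x, y) \<in> cf"
proof -
  have "(b, x) \<in> cf"
    using assms(1,2) cf_sym cf_hereditary by (auto dest: symD)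
  then show ?thesis
    using assms(3) cf_sym cf_hereditary by (auto dest: symD)
qed

lemma conflict_N_iff:
  assumes "t \<in> E" "t' \<in> E"
  shows "conflict N t t' \<longleftrightarrow> (t, t') \<in> cf"
proof
  assume "(t, t') \<in> cf"
  have "\<not> (t \<in> set ts \<and> t' \<in> set ts)" if "run N (m0 N) ts = Some m" for ts m
    using reachable_marking[OF that] \<open>(t, t') \<in> cf\<close> unfolding conflict_free_def by blast
  then show "conflict N t t'"
    unfolding conflict_def states_def by fastforce
next
  assume "conflict N t t'"
  show "(t, t') \<in> cf"
  proof (rule ccontr)
    assume no_cf: "(t, t') \<notin> cf"
    define C where "C = {e. (e, t) \<in> lt\<^sup>= \<or> (e, t') \<in> lt\<^sup>=}"
    have "C = insert t {e. (e, t) \<in> lt} \<union> insert t' {e. (e, t') \<in> lt}"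
      unfolding C_def by blast
    then have "finite C" "C \<subseteq> E"
      using assms finite_causes lt_subset by auto
    moreover have "downward_closed C"
      using lt_less_trans unfolding downward_closed_def C_def by blast
    moreover have "conflict_free C"
      unfolding conflict_free_def
    proof (intro ballI notI)
      fix a b assume "a \<in> C" "b \<in> C" "(a, b) \<in> cf"
      then obtain x y where "x \<in> {t, t'}" "y \<in> {t, t'}" "(x, y) \<in> cf"
        using conflict_inherited unfolding C_def by blast
      then show False
        using no_cf cf_irrefl cf_sym by (auto dest: symD)
    qed
    ultimately obtain ts where "run N (m0 N) ts = Some (marking_of C)" "set ts = C"
      using run_to_configuration by blast
    then have "mset ts \<in> states N" "t \<in># mset ts" "t' \<in># mset ts"
      unfolding states_def C_def by auto
    then show False
      using \<open>conflict N t t'\<close> unfolding conflict_def by blast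
  qed
qed

lemma prec_N_iff: "t \<in> E \<Longrightarrow> prec N t t' \<longleftrightarrow> (t, t') \<in> lt"
  by (auto simp: prec_def preT_N inhT_N)

lemma prec_rel_N_subset: "prec_rel N \<subseteq> lt"
  using prec_N_iff by (auto simp: prec_rel_def)

lemma contextual_net_N: "contextual_net N"
  unfolding contextual_net_def safe_def reachable_def
proof (intro conjI allI ballI impI)
  have "W \<subseteq> E" if "W \<in> conflict_pairs" for W
    using that cf_subset unfolding conflict_pairs_def by auto
  then show "flow N \<subseteq> Pl ` places N \<times> Tr ` trans N \<union> Tr ` trans N \<times> Pl ` places N"
    by (auto simp: flow_N places_N)
  show "inh N \<subseteq> places N \<times> trans N"
    using lt_subset by (auto simp: inh_N places_N)
  show "s \<in> places N" if "0 < m0 N s" for s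
    using that by (cases s) (auto simp: m0_N marking_of_def places_N)
  show "m s \<le> 1" if m: "m \<in> {m. \<exists>ts. run N (m0 N) ts = Some m}" for m s
  proof -
    obtain ts where "run N (m0 N) ts = Some m"
      using m by blast
    then have "m = marking_of (set ts)"
      using reachable_marking by blast
    then show ?thesis
      by (cases s) (simp_all add: marking_of_def)
  qed
qed (auto simp: preT_N)

lemma no_flow_path_between_transitions: "(Tr t, Tr t') \<notin> (flow N)\<^sup>+"
proof
  assume "(Tr t, Tr t') \<in> (flow N)\<^sup>+"
  then have "Tr t' = Pl (ES t)"
    by (induction rule: trancl_induct) (auto simp: flow_N)
  then show False by simp
qed

lemma pre_causal_N: "pre_causal N"
  unfolding pre_causal_def
proof (intro conjI ballI impI allI)
  show "preT N t \<inter> inhT N t = {}" if "t \<in> trans N" for t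
    using that lt_irrefl by (auto simp: preT_N inhT_N irrefl_def)
  show "card (lab N ` postS N s) = 1" if "s \<in> inhT N t" for t s
    using that lt_subset by (auto simp: inhT_N postS_SE)
  show "\<not> prec N t' t" if "t \<in> trans N" "t' \<in> trans N" "prec N t t'" for t t'
    using that lt_irrefl lt_less_trans prec_N_iff by (simp add: irrefl_def) blast
  show "finite (inhT N t \<union> rdT N t)" if "t \<in> trans N" for t
    using that finite_causes by (simp add: inhT_N)
  show "preT N t \<inter> preT N t' \<noteq> {}" if "t \<in> trans N" "t' \<in> trans N" "conflict N t t'" for t t'
  proof -
    have "{t, t'} \<in> conflict_pairs"
      using that conflict_N_iff unfolding conflict_pairs_def by auto
    then have "CF {t, t'} \<in> preT N t \<inter> preT N t'"
      using that by (simp add: preT_N)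
    then show ?thesis by blast
  qed
qed (simp_all add: contextual_net_N no_flow_path_between_transitions)

lemma causal_net_N: "causal_net N"
  unfolding causal_net_def
proof (intro conjI ballI)
  show "po_on (set_mset X) ((prec_rel N \<inter> set_mset X \<times> set_mset X)\<^sup>*)" for X
    using prec_rel_N_subset lt_irrefl lt_trans by (intro po_on_rtrancl_subset) auto
  show "\<exists>X\<in>states N. t \<in># X" if "t \<in> trans N" for t
    using that conflict_N_iff[of t t] cf_irrefl by (auto simp: conflict_def)
qed (rule pre_causal_N)

lemma occurrence_causal_net_N: "occurrence_causal_net N"
  unfolding occurrence_causal_net_def
proof (intro conjI ballI impI)
  show "po_on (trans N) ((prec_rel N)\<^sup>*)"
    using prec_rel_N_subset lt_irrefl lt_trans by (rule po_on_rtrancl_subset)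
  show "conflict N t t''"
    if "t \<in> trans N" "t' \<in> trans N" "t'' \<in> trans N"
      and "conflict N t t' \<and> (t', t'') \<in> (prec_rel N)\<^sup>*" for t t' t''
  proof -
    have "(t', t'') \<in> lt\<^sup>*"
      using that(4) rtrancl_mono[OF prec_rel_N_subset] by blast
    then have "(t', t'') \<in> lt\<^sup>="
      using lt_trans by (simp add: rtrancl_trancl_reflcl)
    then show ?thesis
      using that conflict_N_iff conflict_inherited[of t t' t] by auto
  qed
qed (simp_all add: causal_net_N)

end

theorem mainTheorem13:
  fixes E :: "'e set" and lt cf :: "'e rel"
  assumes "pes E lt cf"
  shows "occurrence_causal_net (net_of_pes E lt cf)"
proof -
  interpret pes_net E lt cf
    using assms by unfold_locales
  show ?thesis
    by (rule occurrence_causal_net_N)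
qed

end
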